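(* Let $K$ be a field and $m,n,r$ positive integers. Let $R=K[x_{ij}^k \mid 1\le i\le m,\ 1\le j\le n,\ 1\le k\le r]$ and let $I_{mn}^r\subseteq R$ be the ideal generated by all $2$-minors of the horizontal concatenation $H=(X_1\ \cdots\ X_r)$ and all $2$-minors of the vertical concatenation $V$ (the $X_k$ stacked on top of each other) of the matrices $X_k=(x_{ij}^k)_{1\le i\le m,1\le j\le n}$. Let $P_{mnr}$ be the poset which is the disjoint union of three pairwise incomparable chains $A_1,A_2,A_3$ with $|A_1|=m-1$, $|A_2|=n-1$, $|A_3|=r-1$, and let $L_{mnr}=\mathcal J(P_{mnr})$ be the distributive lattice of order ideals (downward closed subsets) of $P_{mnr}$, ordered by inclusion. Then $R/I_{mn}^r\cong K[L_{mnr}]$.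
   Context: For a finite lattice $L$, the Hibi ring is $K[L]=K[x_u\mid u\in L]/(x_{u_1}x_{u_2}-x_{u_1\wedge u_2}x_{u_1\vee u_2}\mid u_1,u_2\in L)$. In $\mathcal J(P)$ the meet is intersection and the join is union. *)

theory Defs
  imports "HOL-Library.Poly_Mapping" "HOL-Algebra.QuotRing"
begin

text \<open>Polynomials over a commutative ring 'k in variables of type 'v are finitely
  supported maps from monomials (finitely supported exponent vectors) to coefficients.\<close>

definition polys_in :: "'v set \<Rightarrow> (('v \<Rightarrow>\<^sub>0 nat) \<Rightarrow>\<^sub>0 'k::comm_ring_1) set" where
  "polys_in V = {p. \<forall>mon \<in> Poly_Mapping.keys p. Poly_Mapping.keys mon \<subseteq> V}"

definition poly_ring :: "'v set \<Rightarrow> (('v \<Rightarrow>\<^sub>0 nat) \<Rightarrow>\<^sub>0 'k::comm_ring_1) ring" where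
  "poly_ring V = \<lparr>carrier = polys_in V, monoid.mult = (*), one = 1, zero = 0, add = (+)\<rparr>"

definition pvar :: "'v \<Rightarrow> ('v \<Rightarrow>\<^sub>0 nat) \<Rightarrow>\<^sub>0 'k::comm_ring_1" where
  "pvar v = Poly_Mapping.single (Poly_Mapping.single v 1) 1"

definition pconst :: "'k::comm_ring_1 \<Rightarrow> ('v \<Rightarrow>\<^sub>0 nat) \<Rightarrow>\<^sub>0 'k" where
  "pconst c = Poly_Mapping.single 0 c"

definition kalg_iso_quot ::
  "'v set \<Rightarrow> (('v \<Rightarrow>\<^sub>0 nat) \<Rightarrow>\<^sub>0 'k::comm_ring_1) set \<Rightarrow>
   'w set \<Rightarrow> (('w \<Rightarrow>\<^sub>0 nat) \<Rightarrow>\<^sub>0 'k) set \<Rightarrow> bool" where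
  "kalg_iso_quot V I W J =
    (\<exists>h \<in> ring_iso (poly_ring V Quot I) (poly_ring W Quot J).
       \<forall>c. h (I +>\<^bsub>poly_ring V\<^esub> pconst c) = J +>\<^bsub>poly_ring W\<^esub> pconst c)"

text \<open>Variables x_{ij}^k, 0-indexed: (i,j,k) with i<m, j<n, k<r.\<close>

definition gen_vars :: "nat \<Rightarrow> nat \<Rightarrow> nat \<Rightarrow> (nat \<times> nat \<times> nat) set" where
  "gen_vars m n r = {(i,j,k). i < m \<and> j < n \<and> k < r}"

text \<open>2-minors of H = (X_1 ... X_r) (m x nr; column of x_{ij}^k is k*n+j) and of the
  vertical concatenation V (mr x n; row of x_{ij}^k is k*m+i).\<close>

definition minors_H :: "nat \<Rightarrow> nat \<Rightarrow> nat \<Rightarrow> ((nat \<times> nat \<times> nat \<Rightarrow>\<^sub>0 nat) \<Rightarrow>\<^sub>0 'k::comm_ring_1) set" where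
  "minors_H m n r = {pvar (i,j,k) * pvar (i',j',k') - pvar (i,j',k') * pvar (i',j,k) | i i' j j' k k'.
     i < i' \<and> i' < m \<and> j < n \<and> j' < n \<and> k < r \<and> k' < r \<and> k*n + j < k'*n + j'}"

definition minors_V :: "nat \<Rightarrow> nat \<Rightarrow> nat \<Rightarrow> ((nat \<times> nat \<times> nat \<Rightarrow>\<^sub>0 nat) \<Rightarrow>\<^sub>0 'k::comm_ring_1) set" where
  "minors_V m n r = {pvar (i,j,k) * pvar (i',j',k') - pvar (i,j',k) * pvar (i',j,k') | i i' j j' k k'.
     i < m \<and> i' < m \<and> j < j' \<and> j' < n \<and> k < r \<and> k' < r \<and> k*m + i < k'*m + i'}"

definition I_mnr :: "nat \<Rightarrow> nat \<Rightarrow> nat \<Rightarrow> ((nat \<times> nat \<times> nat \<Rightarrow>\<^sub>0 nat) \<Rightarrow>\<^sub>0 'k::comm_ring_1) set" where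
  "I_mnr m n r = genideal (poly_ring (gen_vars m n r)) (minors_H m n r \<union> minors_V m n r)"

definition order_ideals :: "'a set \<Rightarrow> ('a \<Rightarrow> 'a \<Rightarrow> bool) \<Rightarrow> 'a set set" where
  "order_ideals P leq = {I. I \<subseteq> P \<and> (\<forall>x\<in>I. \<forall>y\<in>P. leq y x \<longrightarrow> y \<in> I)}"

text \<open>P_{mnr}: disjoint union of three incomparable chains A_0, A_1, A_2 of sizes
  m-1, n-1, r-1; element (c,t) is the t-th element of chain c.\<close>

definition P_mnr :: "nat \<Rightarrow> nat \<Rightarrow> nat \<Rightarrow> (nat \<times> nat) set" where
  "P_mnr m n r = {(c,t). (c = 0 \<and> t < m - 1) \<or> (c = 1 \<and> t < n - 1) \<or> (c = 2 \<and> t < r - 1)}"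

definition P_le :: "nat \<times> nat \<Rightarrow> nat \<times> nat \<Rightarrow> bool" where
  "P_le x y = (fst x = fst y \<and> snd x \<le> snd y)"

definition L_mnr :: "nat \<Rightarrow> nat \<Rightarrow> nat \<Rightarrow> (nat \<times> nat) set set" where
  "L_mnr m n r = order_ideals (P_mnr m n r) P_le"

text \<open>Hibi ideal of a finite lattice L with meet and join; K[L] = K[x_u | u in L] / hibi_ideal.\<close>

definition hibi_ideal :: "'u set \<Rightarrow> ('u \<Rightarrow> 'u \<Rightarrow> 'u) \<Rightarrow> ('u \<Rightarrow> 'u \<Rightarrow> 'u) \<Rightarrow>
    (('u \<Rightarrow>\<^sub>0 nat) \<Rightarrow>\<^sub>0 'k::comm_ring_1) set" where
  "hibi_ideal L mt jn = genideal (poly_ring L)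
     {pvar u1 * pvar u2 - pvar (mt u1 u2) * pvar (jn u1 u2) | u1 u2. u1 \<in> L \<and> u2 \<in> L}"

end

theory Submission
  imports Defs "HOL-Library.Product_Order"
begin

text \<open>Identify the variable x_{ij}^k with the order ideal of P_mnr formed by the i, j and k
  smallest elements of the three chains. This is a bijection from the variables onto L_mnr,
  and it turns intersection and union into the componentwise minimum and maximum of index
  triples, so renaming variables along it gives the isomorphism once the two ideals are seen
  to correspond. Every 2-minor of H or V is x_a x_b - x_c x_d where the pairs a, b and c, d have
  the same componentwise minimum and maximum, hence a difference of two Hibi relations.
  Conversely, the 2-minors of H exchange the first index of two variables and those of V the
  second; composing both exchanges the third. Sorting the three coordinates one at a time thus
  gives x_a x_b = x_{min a b} x_{max a b} modulo the ideal of minors.\<close>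

section \<open>Renaming variables\<close>

lemma sum_single_lookup: "(\<Sum>k\<in>Poly_Mapping.keys p. Poly_Mapping.single k (Poly_Mapping.lookup p k)) = p"
  by (rule poly_mapping_eqI) (simp add: lookup_sum lookup_single when_def in_keys_iff)

lemma keys_sum_subset: "Poly_Mapping.keys (sum P A) \<subseteq> (\<Union>i\<in>A. Poly_Mapping.keys (P i))"
proof (induction A rule: infinite_finite_induct)
  case (insert x F)
  then show ?case using keys_add[of "P x" "sum P F"] by auto
qed auto

definition pm_extend :: "('a \<Rightarrow> 'b::zero \<Rightarrow> 'c::comm_monoid_add) \<Rightarrow> ('a \<Rightarrow>\<^sub>0 'b) \<Rightarrow> 'c" where
  "pm_extend g p = (\<Sum>k\<in>Poly_Mapping.keys p. g k (Poly_Mapping.lookup p k))"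

lemma pm_extend_zero [simp]: "pm_extend g 0 = 0"
  by (simp add: pm_extend_def)

lemma pm_extend_single:
  assumes "\<And>k. g k 0 = 0"
  shows "pm_extend g (Poly_Mapping.single k v) = g k v"
  using assms by (simp add: pm_extend_def)

lemma pm_extend_add:
  assumes "\<And>k. g k 0 = 0" "\<And>k a b. g k (a + b) = g k a + g k b"
  shows "pm_extend g (p + q) = pm_extend g p + pm_extend g q"
  unfolding pm_extend_def by (rule setsum_keys_plus_distrib) (use assms in auto)

lemma pm_extend_sum:
  assumes "\<And>k. g k 0 = 0" "\<And>k a b. g k (a + b) = g k a + g k b"
  shows "pm_extend g (sum P A) = (\<Sum>i\<in>A. pm_extend g (P i))"
  by (induction A rule: infinite_finite_induct) (simp_all add: pm_extend_add[OF assms])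

definition monom_rename :: "('v \<Rightarrow> 'w) \<Rightarrow> ('v \<Rightarrow>\<^sub>0 nat) \<Rightarrow> ('w \<Rightarrow>\<^sub>0 nat)" where
  "monom_rename f = pm_extend (\<lambda>v e. Poly_Mapping.single (f v) e)"

definition poly_rename :: "('v \<Rightarrow> 'w) \<Rightarrow> (('v \<Rightarrow>\<^sub>0 nat) \<Rightarrow>\<^sub>0 'k::comm_ring_1) \<Rightarrow> (('w \<Rightarrow>\<^sub>0 nat) \<Rightarrow>\<^sub>0 'k)" where
  "poly_rename f = pm_extend (\<lambda>a c. Poly_Mapping.single (monom_rename f a) c)"

lemma monom_rename_add: "monom_rename f (a + b) = monom_rename f a + monom_rename f b"
  unfolding monom_rename_def by (rule pm_extend_add) (simp_all add: single_add)

lemma monom_rename_single: "monom_rename f (Poly_Mapping.single v e) = Poly_Mapping.single (f v) e"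
  unfolding monom_rename_def by (rule pm_extend_single) simp

lemma keys_monom_rename: "Poly_Mapping.keys (monom_rename f a) \<subseteq> f ` Poly_Mapping.keys a"
  unfolding monom_rename_def pm_extend_def by (rule order_trans[OF keys_sum_subset]) auto

lemma monom_rename_inverse:
  assumes "\<And>v. v \<in> Poly_Mapping.keys a \<Longrightarrow> g (f v) = v"
  shows "monom_rename g (monom_rename f a) = a"
proof -
  have "monom_rename g (monom_rename f a) =
      (\<Sum>v\<in>Poly_Mapping.keys a. monom_rename g (Poly_Mapping.single (f v) (Poly_Mapping.lookup a v)))"
    unfolding monom_rename_def[of f] pm_extend_def by (simp add: monom_rename_def pm_extend_sum single_add)
  also have "\<dots> = (\<Sum>v\<in>Poly_Mapping.keys a. Poly_Mapping.single v (Poly_Mapping.lookup a v))"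
    by (rule sum.cong) (simp_all add: monom_rename_single assms)
  also have "\<dots> = a" by (rule sum_single_lookup)
  finally show ?thesis .
qed

lemma poly_rename_add: "poly_rename f (p + q) = poly_rename f p + poly_rename f q"
  unfolding poly_rename_def by (rule pm_extend_add) (simp_all add: single_add)

lemma poly_rename_single:
  "poly_rename f (Poly_Mapping.single a c) = Poly_Mapping.single (monom_rename f a) c"
  unfolding poly_rename_def by (rule pm_extend_single) simp

lemma poly_rename_sum: "poly_rename f (sum P A) = (\<Sum>i\<in>A. poly_rename f (P i))"
  unfolding poly_rename_def by (rule pm_extend_sum) (simp_all add: single_add)

lemma poly_rename_one: "poly_rename f 1 = 1"
  using poly_rename_single[of f 0 1] by (simp add: monom_rename_def)

lemma mult_eq_sum_single:
  "p * q = (\<Sum>a\<in>Poly_Mapping.keys p. \<Sum>b\<in>Poly_Mapping.keys q.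
      Poly_Mapping.single (a + b) (Poly_Mapping.lookup p a * Poly_Mapping.lookup q b))"
  by (subst (1 2) sum_single_lookup[symmetric]) (simp add: sum_product mult_single)

lemma poly_rename_mult: "poly_rename f (p * q) = poly_rename f p * poly_rename f q"
proof -
  have "poly_rename f (p * q) = (\<Sum>a\<in>Poly_Mapping.keys p. \<Sum>b\<in>Poly_Mapping.keys q.
      Poly_Mapping.single (monom_rename f a + monom_rename f b) (Poly_Mapping.lookup p a * Poly_Mapping.lookup q b))"
    by (subst mult_eq_sum_single) (simp add: poly_rename_sum poly_rename_single monom_rename_add)
  also have "\<dots> = poly_rename f p * poly_rename f q"
    by (simp add: poly_rename_def pm_extend_def sum_product mult_single)
  finally show ?thesis .
qed

lemma poly_rename_uminus:
  fixes p :: "('v \<Rightarrow>\<^sub>0 nat) \<Rightarrow>\<^sub>0 'k::comm_ring_1"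
  shows "poly_rename f (- p) = - poly_rename f p"
proof -
  have "poly_rename f (- 1 :: ('v \<Rightarrow>\<^sub>0 nat) \<Rightarrow>\<^sub>0 'k) = - 1"
    using poly_rename_single[of f 0 "-1"] by (simp add: single_uminus monom_rename_def)
  then show ?thesis
    using poly_rename_mult[of f "- 1" p] by simp
qed

lemma poly_rename_diff: "poly_rename f (p - q) = poly_rename f p - poly_rename f q"
  using poly_rename_add[of f p "- q"] by (simp add: poly_rename_uminus)

lemma poly_rename_pvar: "poly_rename f (pvar v) = pvar (f v)"
  by (simp add: pvar_def poly_rename_single monom_rename_single)

lemma poly_rename_pconst: "poly_rename f (pconst c) = pconst c"
  by (simp add: pconst_def poly_rename_single monom_rename_def)

lemma keys_poly_rename: "Poly_Mapping.keys (poly_rename f p) \<subseteq> monom_rename f ` Poly_Mapping.keys p"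
  unfolding poly_rename_def pm_extend_def by (rule order_trans[OF keys_sum_subset]) auto

lemma poly_ring_simps [simp]:
  "carrier (poly_ring V) = polys_in V"
  "mult (poly_ring V) = (*)"
  "one (poly_ring V) = 1"
  "zero (poly_ring V) = 0"
  "add (poly_ring V) = (+)"
  by (simp_all add: poly_ring_def)

lemma mem_polys_in: "p \<in> polys_in V \<longleftrightarrow> (\<forall>a\<in>Poly_Mapping.keys p. Poly_Mapping.keys a \<subseteq> V)"
  by (simp add: polys_in_def)

lemma polys_in_add: "p \<in> polys_in V \<Longrightarrow> q \<in> polys_in V \<Longrightarrow> p + q \<in> polys_in V"
  unfolding polys_in_def using keys_add[of p q] by blast

lemma polys_in_uminus: "p \<in> polys_in V \<Longrightarrow> - p \<in> polys_in V"
  by (simp add: polys_in_def in_keys_iff)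

lemma polys_in_diff: "p \<in> polys_in V \<Longrightarrow> q \<in> polys_in V \<Longrightarrow> p - q \<in> polys_in V"
  using polys_in_add[OF _ polys_in_uminus, of p V q] by simp

lemma polys_in_mult: "p \<in> polys_in V \<Longrightarrow> q \<in> polys_in V \<Longrightarrow> p * q \<in> polys_in V"
proof -
  assume p: "p \<in> polys_in V" and q: "q \<in> polys_in V"
  show ?thesis unfolding mem_polys_in
  proof
    fix mon assume "mon \<in> Poly_Mapping.keys (p * q)"
    then obtain a b where "mon = a + b" "a \<in> Poly_Mapping.keys p" "b \<in> Poly_Mapping.keys q"
      using keys_mult[of p q] by blast
    then show "Poly_Mapping.keys mon \<subseteq> V"
      using keys_add[of a b] p q unfolding mem_polys_in by blast
  qed
qed

lemma polys_in_zero: "0 \<in> polys_in V"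
  by (simp add: polys_in_def)

lemma polys_in_one: "1 \<in> polys_in V"
  by (simp add: polys_in_def)

lemma polys_in_pconst: "pconst c \<in> polys_in V"
  by (simp add: polys_in_def pconst_def)

lemma polys_in_pvar: "v \<in> V \<Longrightarrow> pvar v \<in> polys_in V"
  by (simp add: polys_in_def pvar_def)

lemma poly_rename_inverse:
  assumes "\<And>v. v \<in> V \<Longrightarrow> g (f v) = v" "p \<in> polys_in V"
  shows "poly_rename g (poly_rename f p) = p"
proof -
  have "poly_rename g (poly_rename f p) =
      (\<Sum>a\<in>Poly_Mapping.keys p. poly_rename g (Poly_Mapping.single (monom_rename f a) (Poly_Mapping.lookup p a)))"
    unfolding poly_rename_def[of f] pm_extend_def by (simp add: poly_rename_sum)
  also have "\<dots> = (\<Sum>a\<in>Poly_Mapping.keys p. Poly_Mapping.single a (Poly_Mapping.lookup p a))"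
  proof (rule sum.cong)
    fix a assume "a \<in> Poly_Mapping.keys p"
    then have "monom_rename g (monom_rename f a) = a"
      using assms by (intro monom_rename_inverse) (auto simp: mem_polys_in)
    then show "poly_rename g (Poly_Mapping.single (monom_rename f a) (Poly_Mapping.lookup p a)) =
        Poly_Mapping.single a (Poly_Mapping.lookup p a)"
      by (simp add: poly_rename_single)
  qed simp
  also have "\<dots> = p" by (rule sum_single_lookup)
  finally show ?thesis .
qed

lemma cring_poly_ring: "cring (poly_ring V :: (('v \<Rightarrow>\<^sub>0 nat) \<Rightarrow>\<^sub>0 'k::comm_ring_1) ring)"
proof -
  have "\<exists>y\<in>polys_in V. y + x = 0 \<and> x + y = 0" if "x \<in> polys_in V" for x :: "('v \<Rightarrow>\<^sub>0 nat) \<Rightarrow>\<^sub>0 'k"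
    using that by (intro bexI[of _ "- x"]) (simp_all add: polys_in_uminus)
  then show ?thesis
    by unfold_locales
      (auto simp: Units_def algebra_simps polys_in_add polys_in_mult polys_in_zero polys_in_one)
qed

lemma ring_poly_ring: "ring (poly_ring V)"
  using cring_poly_ring cring.axioms(1) by blast

lemma polys_in_poly_rename:
  assumes "f ` V \<subseteq> W" "p \<in> polys_in V"
  shows "poly_rename f p \<in> polys_in W"
  unfolding mem_polys_in
proof
  fix b assume "b \<in> Poly_Mapping.keys (poly_rename f p)"
  then obtain a where "a \<in> Poly_Mapping.keys p" "b = monom_rename f a"
    using keys_poly_rename by blast
  then show "Poly_Mapping.keys b \<subseteq> W"
    using keys_monom_rename[of f a] assms unfolding mem_polys_in by blast
qed

lemma poly_rename_ring_hom:
  assumes "f ` V \<subseteq> W"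
  shows "poly_rename f \<in> ring_hom (poly_ring V :: (('v \<Rightarrow>\<^sub>0 nat) \<Rightarrow>\<^sub>0 'k::comm_ring_1) ring) (poly_ring W)"
  by (rule ring_hom_memI)
    (auto simp: polys_in_poly_rename[OF assms] poly_rename_add poly_rename_mult poly_rename_one)

section \<open>Quotients of polynomial rings\<close>

lemma FactRing_iso_of_vimage:
  assumes R: "ring R" and S: "ring S" and h: "h \<in> ring_hom R S"
    and J: "ideal J S" and surj: "h ` carrier R = carrier S"
    and I: "I \<subseteq> carrier R" and vimage: "\<And>x. x \<in> carrier R \<Longrightarrow> h x \<in> J \<longleftrightarrow> x \<in> I"
  obtains \<phi> where "\<phi> \<in> ring_iso (R Quot I) (S Quot J)"
    and "\<And>x. x \<in> carrier R \<Longrightarrow> \<phi> (I +>\<^bsub>R\<^esub> x) = J +>\<^bsub>S\<^esub> h x"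
proof -
  let ?H = "\<lambda>x. J +>\<^bsub>S\<^esub> h x"
  interpret J: ideal J S by (rule J)
  have "?H \<in> ring_hom R (S Quot J)"
    using ring_hom_trans[OF h J.rcos_ring_hom] by (simp add: o_def)
  then interpret H: ring_hom_ring R "S Quot J" ?H
    by (intro ring_hom_ringI2 R J.quotient_is_ring)
  have "?H x = J \<longleftrightarrow> h x \<in> J" if "x \<in> carrier R" for x
    using J.a_rcos_self[of "h x"] J.a_rcos_const[of "h x"] ring_hom_closed[OF h that] by auto
  then have ker: "a_kernel R (S Quot J) ?H = I"
    using I vimage unfolding a_kernel_def' by (auto simp: FactRing_def)
  have "?H ` carrier R = carrier (S Quot J)"
    unfolding FactRing_def A_RCOSETS_def' using surj by auto (metis image_iff)
  from H.FactRing_iso_set[OF this] H.the_elem_simp show ?thesis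
    unfolding ker by (intro that) auto
qed

lemma ring_hom_genideal_subset:
  assumes "ring R" "ring S" "h \<in> ring_hom R S" "X \<subseteq> carrier R" "ideal J S" "h ` X \<subseteq> J"
  shows "h ` genideal R X \<subseteq> J"
proof -
  interpret ring_hom_ring R S h by (rule ring_hom_ringI2) (use assms in auto)
  have "genideal R X \<subseteq> {x \<in> carrier R. h x \<in> J}"
    using ring.genideal_minimal[OF assms(1) ideal_vimage[OF assms(5)]] assms(4,6) by blast
  then show ?thesis by blast
qed

lemma kalg_iso_quot_poly_rename:
  fixes f :: "'v \<Rightarrow> 'w" and g :: "'w \<Rightarrow> 'v"
  assumes f: "f ` V \<subseteq> W" and g: "g ` W \<subseteq> V"
    and gf: "\<And>v. v \<in> V \<Longrightarrow> g (f v) = v" and fg: "\<And>w. w \<in> W \<Longrightarrow> f (g w) = w"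
    and X: "X \<subseteq> polys_in V" and Y: "Y \<subseteq> polys_in W"
    and fX: "poly_rename f ` X \<subseteq> genideal (poly_ring W) Y"
    and gY: "poly_rename g ` Y \<subseteq> genideal (poly_ring V) X"
  shows "kalg_iso_quot V (genideal (poly_ring V) X :: (('v \<Rightarrow>\<^sub>0 nat) \<Rightarrow>\<^sub>0 'k::comm_ring_1) set)
           W (genideal (poly_ring W) Y)"
proof -
  let ?R = "poly_ring V :: (('v \<Rightarrow>\<^sub>0 nat) \<Rightarrow>\<^sub>0 'k) ring"
  let ?S = "poly_ring W :: (('w \<Rightarrow>\<^sub>0 nat) \<Rightarrow>\<^sub>0 'k) ring"
  let ?I = "genideal ?R X" and ?J = "genideal ?S Y"
  have I: "ideal ?I ?R" and J: "ideal ?J ?S"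
    using ring.genideal_ideal[OF ring_poly_ring] X Y by auto
  have hom_f: "poly_rename f \<in> ring_hom ?R ?S" and hom_g: "poly_rename g \<in> ring_hom ?S ?R"
    using poly_rename_ring_hom f g by blast+
  have surj: "poly_rename f ` carrier ?R = carrier ?S"
    using polys_in_poly_rename[OF f] polys_in_poly_rename[OF g] poly_rename_inverse[where V = W and f = g and g = f, OF fg] by force
  have fI: "poly_rename f ` ?I \<subseteq> ?J"
    by (rule ring_hom_genideal_subset[OF ring_poly_ring ring_poly_ring hom_f _ J fX]) (simp add: X)
  have gJ: "poly_rename g ` ?J \<subseteq> ?I"
    by (rule ring_hom_genideal_subset[OF ring_poly_ring ring_poly_ring hom_g _ I gY]) (simp add: Y)
  have vimage: "poly_rename f p \<in> ?J \<longleftrightarrow> p \<in> ?I" if "p \<in> carrier ?R" for p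
  proof
    assume "poly_rename f p \<in> ?J"
    then have "poly_rename g (poly_rename f p) \<in> ?I" using gJ by blast
    then show "p \<in> ?I" using poly_rename_inverse[where V = V and f = f and g = g, OF gf that[simplified]] by simp
  qed (use fI in blast)
  have "?I \<subseteq> carrier ?R"
    using additive_subgroup.a_subset[OF ideal.axioms(1)[OF I]] .
  then obtain \<phi> where iso: "\<phi> \<in> ring_iso (?R Quot ?I) (?S Quot ?J)"
      and coset: "\<And>p. p \<in> carrier ?R \<Longrightarrow> \<phi> (?I +>\<^bsub>?R\<^esub> p) = ?J +>\<^bsub>?S\<^esub> poly_rename f p"
    using FactRing_iso_of_vimage[OF ring_poly_ring ring_poly_ring hom_f J surj _ vimage] by metis
  show ?thesis
    unfolding kalg_iso_quot_def
    using iso coset[of "pconst c" for c] by (auto simp: polys_in_pconst poly_rename_pconst)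
qed

section \<open>Binomials in the ideal of 2-minors\<close>

lemma ideal_poly_ring_add: "ideal I (poly_ring V) \<Longrightarrow> p \<in> I \<Longrightarrow> q \<in> I \<Longrightarrow> p + q \<in> I"
  using additive_subgroup.a_closed[OF ideal.axioms(1)] by fastforce

lemma ideal_poly_ring_zero: "ideal I (poly_ring V) \<Longrightarrow> 0 \<in> I"
  using additive_subgroup.zero_closed[OF ideal.axioms(1)] by fastforce

lemma ideal_poly_ring_uminus:
  fixes p :: "('v \<Rightarrow>\<^sub>0 nat) \<Rightarrow>\<^sub>0 'k::comm_ring_1"
  assumes "ideal I (poly_ring V)" "p \<in> I"
  shows "- p \<in> I"
proof -
  have "(- 1 :: ('v \<Rightarrow>\<^sub>0 nat) \<Rightarrow>\<^sub>0 'k) \<in> polys_in V"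
    by (rule polys_in_uminus[OF polys_in_one])
  then show ?thesis
    using ideal.I_l_closed[OF assms, where x = "- 1"] by simp
qed

definition binom :: "'v \<Rightarrow> 'v \<Rightarrow> 'v \<Rightarrow> 'v \<Rightarrow> ('v \<Rightarrow>\<^sub>0 nat) \<Rightarrow>\<^sub>0 'k::comm_ring_1" where
  "binom a b c d = pvar a * pvar b - pvar c * pvar d"

lemma binom_self: "binom a b a b = 0"
  by (simp add: binom_def)

lemma binom_commute_right: "binom a b c d = binom a b d c"
  by (simp add: binom_def mult.commute)

lemma polys_in_binom: "a \<in> V \<Longrightarrow> b \<in> V \<Longrightarrow> c \<in> V \<Longrightarrow> d \<in> V \<Longrightarrow> binom a b c d \<in> polys_in V"
  by (simp add: binom_def polys_in_diff polys_in_mult polys_in_pvar)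

lemma poly_rename_binom: "poly_rename f (binom a b c d) = binom (f a) (f b) (f c) (f d)"
  by (simp add: binom_def poly_rename_diff poly_rename_mult poly_rename_pvar)

lemma ideal_binom_sym:
  assumes "ideal I (poly_ring V)" "binom a b c d \<in> I"
  shows "binom c d a b \<in> I"
  using ideal_poly_ring_uminus[OF assms] by (simp add: binom_def)

lemma ideal_binom_trans:
  assumes "ideal I (poly_ring V)" "binom a b c d \<in> I" "binom c d e f \<in> I"
  shows "binom a b e f \<in> I"
  using ideal_poly_ring_add[OF assms] by (simp add: binom_def)

definition minor2 :: "(nat \<Rightarrow> nat \<Rightarrow> 'a::comm_ring_1) \<Rightarrow> nat \<Rightarrow> nat \<Rightarrow> nat \<Rightarrow> nat \<Rightarrow> 'a" where
  "minor2 M i i' c c' = M i c * M i' c' - M i c' * M i' c"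

lemma minor2_mem_of_ordered_mem:
  assumes uminus: "\<And>x. x \<in> J \<Longrightarrow> - x \<in> J" and zero: "0 \<in> J"
    and ordered: "\<And>i i' c c'. i < i' \<Longrightarrow> i' < p \<Longrightarrow> c < c' \<Longrightarrow> c' < q \<Longrightarrow> minor2 M i i' c c' \<in> J"
    and "i < p" "i' < p" "c < q" "c' < q"
  shows "minor2 M i i' c c' \<in> J"
proof -
  have swap_rows: "minor2 M i' i c c' = - minor2 M i i' c c'"
    and swap_cols: "minor2 M i i' c' c = - minor2 M i i' c c'" for i i' c c'
    by (simp_all add: minor2_def algebra_simps)
  have ordered_rows: "minor2 M i i' c c' \<in> J" if "i < i'" "i' < p" "c < q" "c' < q" for i i' c c'
  proof (cases c c' rule: linorder_cases)
    case greater
    then show ?thesis using uminus[OF ordered[of i i' c' c]] that by (simp add: swap_cols[of _ _ c'])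
  qed (use ordered that zero in \<open>auto simp: minor2_def\<close>)
  show ?thesis
  proof (cases i i' rule: linorder_cases)
    case greater
    then show ?thesis using uminus[OF ordered_rows[of i' i c c']] assms by (simp add: swap_rows[of i'])
  qed (use ordered_rows assms zero in \<open>auto simp: minor2_def\<close>)
qed

lemma minors_subset_polys_in: "minors_H m n r \<union> minors_V m n r \<subseteq> polys_in (gen_vars m n r)"
  unfolding minors_H_def minors_V_def
  by (auto intro!: polys_in_diff polys_in_mult polys_in_pvar simp: gen_vars_def)

lemma ideal_I_mnr: "ideal (I_mnr m n r) (poly_ring (gen_vars m n r))"
  unfolding I_mnr_def by (rule ring.genideal_ideal[OF ring_poly_ring]) (simp only: poly_ring_simps minors_subset_polys_in)

lemma minors_subset_I_mnr: "minors_H m n r \<union> minors_V m n r \<subseteq> I_mnr m n r"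
  unfolding I_mnr_def by (rule ring.genideal_self[OF ring_poly_ring]) (simp only: poly_ring_simps minors_subset_polys_in)

lemma add_mult_less_mult: "j < n \<Longrightarrow> k < r \<Longrightarrow> k * n + j < n * (r::nat)"
proof -
  assume "j < n" "k < r"
  then have "k * n + j < Suc k * n" by simp
  also have "\<dots> \<le> r * n" using \<open>k < r\<close> by (intro mult_le_mono1) simp
  finally show ?thesis by (simp add: mult.commute)
qed

lemma minors_H_memI:
  "i < i' \<Longrightarrow> i' < m \<Longrightarrow> j < n \<Longrightarrow> j' < n \<Longrightarrow> k < r \<Longrightarrow> k' < r \<Longrightarrow> k * n + j < k' * n + j' \<Longrightarrow>
    pvar (i,j,k) * pvar (i',j',k') - pvar (i,j',k') * pvar (i',j,k) \<in> minors_H m n r"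
  unfolding minors_H_def by blast

lemma minors_V_memI:
  "j < j' \<Longrightarrow> j' < n \<Longrightarrow> i < m \<Longrightarrow> i' < m \<Longrightarrow> k < r \<Longrightarrow> k' < r \<Longrightarrow> k * m + i < k' * m + i' \<Longrightarrow>
    pvar (i,j,k) * pvar (i',j',k') - pvar (i,j',k) * pvar (i',j,k') \<in> minors_V m n r"
  unfolding minors_V_def by blast

lemma minor2_mem_I_mnr:
  assumes "\<And>i i' c c'. i < i' \<Longrightarrow> i' < p \<Longrightarrow> c < c' \<Longrightarrow> c' < q \<Longrightarrow> minor2 M i i' c c' \<in> I_mnr m n r"
    and "i < p" "i' < p" "c < q" "c' < q"
  shows "minor2 M i i' c c' \<in> I_mnr m n r"
  by (rule minor2_mem_of_ordered_mem[OF ideal_poly_ring_uminus[OF ideal_I_mnr]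
        ideal_poly_ring_zero[OF ideal_I_mnr] assms])

lemma binom_swap_fst_mem_I_mnr:
  assumes "(i,j,k) \<in> gen_vars m n r" "(i',j',k') \<in> gen_vars m n r"
  shows "binom (i,j,k) (i',j',k') (i',j,k) (i,j',k') \<in> I_mnr m n r"
proof -
  let ?H = "\<lambda>i c. pvar (i, c mod n, c div n)"
  have ordered: "minor2 ?H i i' c c' \<in> minors_H m n r" if "i < i'" "i' < m" "c < c'" "c' < n * r" for i i' c c'
  proof -
    have "0 < n" using that by (cases n) auto
    then have "c mod n < n" "c' mod n < n" "c div n < r" "c' div n < r"
      using that by (auto simp: less_mult_imp_div_less mult.commute)
    moreover have "(c div n) * n + c mod n < (c' div n) * n + c' mod n"
      using that by presburger
    ultimately show ?thesis
      unfolding minor2_def by (rule minors_H_memI[OF that(1,2)])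
  qed
  have "minor2 ?H i i' (k * n + j) (k' * n + j') \<in> I_mnr m n r"
  proof (rule minor2_mem_I_mnr[where p = m and q = "n * r"])
    show "minor2 ?H i i' c c' \<in> I_mnr m n r" if "i < i'" "i' < m" "c < c'" "c' < n * r" for i i' c c'
      using ordered[OF that] minors_subset_I_mnr by blast
  qed (use assms in \<open>auto simp: gen_vars_def add_mult_less_mult\<close>)
  then show ?thesis
    using assms by (simp add: minor2_def binom_def gen_vars_def mult.commute)
qed

lemma binom_swap_snd_mem_I_mnr:
  assumes "(i,j,k) \<in> gen_vars m n r" "(i',j',k') \<in> gen_vars m n r"
  shows "binom (i,j,k) (i',j',k') (i,j',k) (i',j,k') \<in> I_mnr m n r"
proof -
  let ?V = "\<lambda>q j. pvar (q mod m, j, q div m)"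
  have ordered: "minor2 ?V q q' j j' \<in> minors_V m n r" if "q < q'" "q' < m * r" "j < j'" "j' < n" for q q' j j'
  proof -
    have "0 < m" using that by (cases m) auto
    then have "q mod m < m" "q' mod m < m" "q div m < r" "q' div m < r"
      using that by (auto simp: less_mult_imp_div_less mult.commute)
    moreover have "(q div m) * m + q mod m < (q' div m) * m + q' mod m"
      using that by presburger
    ultimately show ?thesis
      unfolding minor2_def by (rule minors_V_memI[OF that(3,4)])
  qed
  have "minor2 ?V (k * m + i) (k' * m + i') j j' \<in> I_mnr m n r"
  proof (rule minor2_mem_I_mnr[where p = "m * r" and q = n])
    show "minor2 ?V q q' j j' \<in> I_mnr m n r" if "q < q'" "q' < m * r" "j < j'" "j' < n" for q q' j j'
      using ordered[OF that] minors_subset_I_mnr by blast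
  qed (use assms in \<open>auto simp: gen_vars_def add_mult_less_mult\<close>)
  then show ?thesis
    using assms by (simp add: minor2_def binom_def gen_vars_def)
qed

lemma binom_swap_thd_mem_I_mnr:
  assumes "(i,j,k) \<in> gen_vars m n r" "(i',j',k') \<in> gen_vars m n r"
  shows "binom (i,j,k) (i',j',k') (i,j,k') (i',j',k) \<in> I_mnr m n r"
proof -
  have "binom (i,j,k) (i',j',k') (i',j,k) (i,j',k') \<in> I_mnr m n r"
    using assms by (rule binom_swap_fst_mem_I_mnr)
  moreover have "binom (i',j,k) (i,j',k') (i',j',k) (i,j,k') \<in> I_mnr m n r"
    using assms by (intro binom_swap_snd_mem_I_mnr) (auto simp: gen_vars_def)
  ultimately have "binom (i,j,k) (i',j',k') (i',j',k) (i,j,k') \<in> I_mnr m n r"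
    by (rule ideal_binom_trans[OF ideal_I_mnr])
  then show ?thesis by (subst binom_commute_right)
qed

lemma binom_inf_sup_mem_I_mnr:
  assumes "x \<in> gen_vars m n r" "y \<in> gen_vars m n r"
  shows "binom x y (inf x y) (sup x y) \<in> I_mnr m n r"
proof -
  obtain i j k i' j' k' where xy: "x = (i,j,k)" "y = (i',j',k')"
    by (cases x, cases y) auto
  let ?a = "min i i'" and ?a' = "max i i'" and ?b = "min j j'" and ?b' = "max j j'"
  have gen_vars: "(i,j,k) \<in> gen_vars m n r" "(i',j',k') \<in> gen_vars m n r"
    "(?a,j,k) \<in> gen_vars m n r" "(?a',j',k') \<in> gen_vars m n r"
    "(?a,?b,k) \<in> gen_vars m n r" "(?a',?b',k') \<in> gen_vars m n r"
    using assms by (auto simp: xy gen_vars_def)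
  have zero: "0 \<in> I_mnr m n r"
    by (rule ideal_poly_ring_zero[OF ideal_I_mnr])
  have "binom (i,j,k) (i',j',k') (?a,j,k) (?a',j',k') \<in> I_mnr m n r"
    using binom_swap_fst_mem_I_mnr[OF gen_vars(1,2)] zero
    by (cases "i \<le> i'") (simp_all add: binom_self)
  moreover have "binom (?a,j,k) (?a',j',k') (?a,?b,k) (?a',?b',k') \<in> I_mnr m n r"
    using binom_swap_snd_mem_I_mnr[OF gen_vars(3,4)] zero
    by (cases "j \<le> j'") (simp_all add: binom_self)
  moreover have "binom (?a,?b,k) (?a',?b',k') (?a,?b,min k k') (?a',?b',max k k') \<in> I_mnr m n r"
    using binom_swap_thd_mem_I_mnr[OF gen_vars(5,6)] zero
    by (cases "k \<le> k'") (simp_all add: binom_self)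
  ultimately show ?thesis
    by (auto simp: xy inf_nat_def sup_nat_def intro: ideal_binom_trans[OF ideal_I_mnr])
qed

section \<open>The Hibi ideal of order ideals of three chains\<close>

lemma order_ideals_Int: "u \<in> order_ideals P leq \<Longrightarrow> v \<in> order_ideals P leq \<Longrightarrow> u \<inter> v \<in> order_ideals P leq"
  unfolding order_ideals_def by blast

lemma order_ideals_Un: "u \<in> order_ideals P leq \<Longrightarrow> v \<in> order_ideals P leq \<Longrightarrow> u \<union> v \<in> order_ideals P leq"
  unfolding order_ideals_def by blast

definition hibi_binomials ::
    "'u set \<Rightarrow> ('u \<Rightarrow> 'u \<Rightarrow> 'u) \<Rightarrow> ('u \<Rightarrow> 'u \<Rightarrow> 'u) \<Rightarrow> (('u \<Rightarrow>\<^sub>0 nat) \<Rightarrow>\<^sub>0 'k::comm_ring_1) set" where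
  "hibi_binomials L mt jn = {binom u v (mt u v) (jn u v) | u v. u \<in> L \<and> v \<in> L}"

lemma hibi_ideal_eq_genideal: "hibi_ideal L mt jn = genideal (poly_ring L) (hibi_binomials L mt jn)"
  by (simp add: hibi_ideal_def hibi_binomials_def binom_def)

lemma hibi_binomials_subset_polys_in:
  assumes "\<And>u v. u \<in> L \<Longrightarrow> v \<in> L \<Longrightarrow> mt u v \<in> L \<and> jn u v \<in> L"
  shows "(hibi_binomials L mt jn :: (('u \<Rightarrow>\<^sub>0 nat) \<Rightarrow>\<^sub>0 'k::comm_ring_1) set) \<subseteq> polys_in L"
  using assms by (auto simp: hibi_binomials_def intro!: polys_in_binom)

lemma binom_mem_hibi_ideal:
  fixes a b c d :: 'u
  assumes closed: "\<And>u v. u \<in> L \<Longrightarrow> v \<in> L \<Longrightarrow> mt u v \<in> L \<and> jn u v \<in> L"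
    and L: "a \<in> L" "b \<in> L" "c \<in> L" "d \<in> L"
    and "mt a b = mt c d" "jn a b = jn c d"
  shows "(binom a b c d :: ('u \<Rightarrow>\<^sub>0 nat) \<Rightarrow>\<^sub>0 'k::comm_ring_1) \<in> hibi_ideal L mt jn"
proof -
  let ?J = "hibi_ideal L mt jn :: (('u \<Rightarrow>\<^sub>0 nat) \<Rightarrow>\<^sub>0 'k) set"
  note generators = hibi_binomials_subset_polys_in[OF closed, where 'k = 'k]
  have J: "ideal ?J (poly_ring L)"
    unfolding hibi_ideal_eq_genideal
    by (rule ring.genideal_ideal[OF ring_poly_ring]) (simp only: poly_ring_simps generators)
  have "binom u v (mt u v) (jn u v) \<in> ?J" if "u \<in> L" "v \<in> L" for u v
    unfolding hibi_ideal_eq_genideal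
    by (rule subsetD[OF ring.genideal_self[OF ring_poly_ring]])
      (use generators that in \<open>auto simp: hibi_binomials_def\<close>)
  then have "binom a b (mt a b) (jn a b) \<in> ?J" "binom (mt a b) (jn a b) c d \<in> ?J"
    using L assms(6,7) ideal_binom_sym[OF J] by metis+
  then show ?thesis by (rule ideal_binom_trans[OF J])
qed

fun chain_ideal :: "nat \<times> nat \<times> nat \<Rightarrow> (nat \<times> nat) set" where
  "chain_ideal (i, j, k) = {(c, t). (c = 0 \<and> t < i) \<or> (c = 1 \<and> t < j) \<or> (c = 2 \<and> t < k)}"

definition chain_counts :: "(nat \<times> nat) set \<Rightarrow> nat \<times> nat \<times> nat" where
  "chain_counts S = (card {t. (0, t) \<in> S}, card {t. (1, t) \<in> S}, card {t. (2, t) \<in> S})"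

lemma chain_counts_chain_ideal [simp]: "chain_counts (chain_ideal x) = x"
proof -
  obtain i j k where "x = (i, j, k)" by (cases x) auto
  moreover have "{t. (0, t) \<in> chain_ideal (i, j, k)} = {..<i}" "{t. (1, t) \<in> chain_ideal (i, j, k)} = {..<j}"
    "{t. (2, t) \<in> chain_ideal (i, j, k)} = {..<k}"
    by auto
  ultimately show ?thesis by (simp add: chain_counts_def)
qed

lemma chain_ideal_inf: "chain_ideal (inf x y) = chain_ideal x \<inter> chain_ideal y"
  by (cases x, cases y) (auto simp: inf_nat_def)

lemma chain_ideal_sup: "chain_ideal (sup x y) = chain_ideal x \<union> chain_ideal y"
  by (cases x, cases y) (auto simp: sup_nat_def)

lemma L_mnr_Int: "u \<in> L_mnr m n r \<Longrightarrow> v \<in> L_mnr m n r \<Longrightarrow> u \<inter> v \<in> L_mnr m n r"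
  unfolding L_mnr_def by (rule order_ideals_Int)

lemma L_mnr_Un: "u \<in> L_mnr m n r \<Longrightarrow> v \<in> L_mnr m n r \<Longrightarrow> u \<union> v \<in> L_mnr m n r"
  unfolding L_mnr_def by (rule order_ideals_Un)

lemma chain_ideal_mem_L_mnr: "x \<in> gen_vars m n r \<Longrightarrow> chain_ideal x \<in> L_mnr m n r"
  by (cases x) (auto simp: gen_vars_def L_mnr_def order_ideals_def P_mnr_def P_le_def)

lemma downward_closed_eq_lessThan_card:
  fixes D :: "nat set"
  assumes "finite D" "\<And>x y. x \<in> D \<Longrightarrow> y \<le> x \<Longrightarrow> y \<in> D"
  shows "D = {..<card D}"
proof (cases "D = {}")
  case False
  then have "D = {..Max D}"
    using assms Max_ge Max_in by blast
  then show ?thesis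
    using card_lessThan[of "Suc (Max D)"] lessThan_Suc_atMost by metis
qed simp

lemma L_mnr_chain_eq_lessThan:
  assumes "S \<in> L_mnr m n r"
  shows "{t. (c, t) \<in> S} = {..<card {t. (c, t) \<in> S}}"
proof (rule downward_closed_eq_lessThan_card)
  have S: "S \<subseteq> P_mnr m n r" and down: "\<And>x y. x \<in> S \<Longrightarrow> y \<in> P_mnr m n r \<Longrightarrow> P_le y x \<Longrightarrow> y \<in> S"
    using assms unfolding L_mnr_def order_ideals_def by blast+
  have "{t. (c, t) \<in> S} \<subseteq> {..<m + n + r}"
    using S by (auto simp: P_mnr_def)
  then show "finite {t. (c, t) \<in> S}" by (rule finite_subset) simp
  fix t t' assume "t \<in> {t. (c, t) \<in> S}" "t' \<le> t"
  moreover from this have "(c, t') \<in> P_mnr m n r"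
    using S by (auto simp: P_mnr_def)
  ultimately show "t' \<in> {t. (c, t) \<in> S}"
    using down by (auto simp: P_le_def)
qed

lemma chain_ideal_chain_counts:
  assumes "S \<in> L_mnr m n r"
  shows "chain_ideal (chain_counts S) = S"
proof (rule Set.set_eqI)
  fix x :: "nat \<times> nat"
  obtain c t where x: "x = (c, t)" by (cases x) auto
  have mem: "t < card {t. (c, t) \<in> S} \<longleftrightarrow> (c, t) \<in> S" for c t
    using L_mnr_chain_eq_lessThan[OF assms, of c] by blast
  have "(c, t) \<in> S \<Longrightarrow> c = 0 \<or> c = 1 \<or> c = 2"
    using assms by (auto simp: L_mnr_def order_ideals_def P_mnr_def)
  then show "x \<in> chain_ideal (chain_counts S) \<longleftrightarrow> x \<in> S"
    unfolding x chain_counts_def by (auto simp: mem)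
qed

lemma chain_counts_mem_gen_vars:
  assumes "S \<in> L_mnr m n r" "m \<ge> 1" "n \<ge> 1" "r \<ge> 1"
  shows "chain_counts S \<in> gen_vars m n r"
proof -
  have "{t. (c, t) \<in> S} \<subseteq> {t. (c, t) \<in> P_mnr m n r}" for c
    using assms(1) by (auto simp: L_mnr_def order_ideals_def)
  moreover have "{t. (0, t) \<in> P_mnr m n r} = {..<m - 1}" "{t. (1, t) \<in> P_mnr m n r} = {..<n - 1}"
    "{t. (2, t) \<in> P_mnr m n r} = {..<r - 1}"
    by (auto simp: P_mnr_def)
  ultimately have "card {t. (0, t) \<in> S} \<le> m - 1" "card {t. (1, t) \<in> S} \<le> n - 1"
    "card {t. (2, t) \<in> S} \<le> r - 1"
    by (metis card_lessThan card_mono finite_lessThan)+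
  then show ?thesis
    using assms(2-4) by (auto simp: chain_counts_def gen_vars_def)
qed

lemma poly_rename_chain_ideal_binom:
  assumes "a \<in> gen_vars m n r" "b \<in> gen_vars m n r" "c \<in> gen_vars m n r" "d \<in> gen_vars m n r"
    and "inf a b = inf c d" "sup a b = sup c d"
  shows "poly_rename chain_ideal (binom a b c d) \<in> hibi_ideal (L_mnr m n r) (\<inter>) (\<union>)"
  unfolding poly_rename_binom
  by (rule binom_mem_hibi_ideal)
    (use assms in \<open>simp_all add: chain_ideal_mem_L_mnr L_mnr_Int L_mnr_Un flip: chain_ideal_inf chain_ideal_sup\<close>)

lemma poly_rename_minors_subset_hibi_ideal:
  "poly_rename chain_ideal ` (minors_H m n r \<union> minors_V m n r) \<subseteq> hibi_ideal (L_mnr m n r) (\<inter>) (\<union>)"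
proof -
  have "poly_rename chain_ideal p \<in> hibi_ideal (L_mnr m n r) (\<inter>) (\<union>)" if "p \<in> minors_H m n r" for p
  proof -
    from that obtain i i' j j' k k' where "p = binom (i,j,k) (i',j',k') (i,j',k') (i',j,k)"
      "i' < m" "i < i'" "j < n" "j' < n" "k < r" "k' < r"
      unfolding minors_H_def binom_def by blast
    then show ?thesis
      by (auto intro!: poly_rename_chain_ideal_binom simp: gen_vars_def inf.commute sup.commute)
  qed
  moreover have "poly_rename chain_ideal p \<in> hibi_ideal (L_mnr m n r) (\<inter>) (\<union>)" if "p \<in> minors_V m n r" for p
  proof -
    from that obtain i i' j j' k k' where "p = binom (i,j,k) (i',j',k') (i,j',k) (i',j,k')"
      "i < m" "i' < m" "j' < n" "j < j'" "k < r" "k' < r"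
      unfolding minors_V_def binom_def by blast
    then show ?thesis
      by (auto intro!: poly_rename_chain_ideal_binom simp: gen_vars_def inf.commute sup.commute)
  qed
  ultimately show ?thesis by blast
qed

lemma poly_rename_hibi_binomials_subset_I_mnr:
  assumes "m \<ge> 1" "n \<ge> 1" "r \<ge> 1"
  shows "poly_rename chain_counts ` hibi_binomials (L_mnr m n r) (\<inter>) (\<union>) \<subseteq> I_mnr m n r"
proof (clarsimp simp: hibi_binomials_def)
  fix u v assume uv: "u \<in> L_mnr m n r" "v \<in> L_mnr m n r"
  define x y where "x = chain_counts u" and "y = chain_counts v"
  have "u = chain_ideal x" "v = chain_ideal y"
    using chain_ideal_chain_counts uv by (simp_all add: x_def y_def)
  moreover have "x \<in> gen_vars m n r" "y \<in> gen_vars m n r"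
    using chain_counts_mem_gen_vars uv assms by (simp_all add: x_def y_def)
  ultimately show "poly_rename chain_counts (binom u v (u \<inter> v) (u \<union> v)) \<in> I_mnr m n r"
    using binom_inf_sup_mem_I_mnr[of x m n r y]
    by (simp add: poly_rename_binom flip: chain_ideal_inf chain_ideal_sup)
qed

theorem corollary3p5:
  fixes m n r :: nat
  assumes "m \<ge> 1" and "n \<ge> 1" and "r \<ge> 1"
  shows "kalg_iso_quot (gen_vars m n r) (I_mnr m n r :: ((nat \<times> nat \<times> nat \<Rightarrow>\<^sub>0 nat) \<Rightarrow>\<^sub>0 'k::field) set)
           (L_mnr m n r) (hibi_ideal (L_mnr m n r) (\<inter>) (\<union>))"
  unfolding I_mnr_def hibi_ideal_eq_genideal
proof (rule kalg_iso_quot_poly_rename)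
  show "chain_ideal ` gen_vars m n r \<subseteq> L_mnr m n r"
    using chain_ideal_mem_L_mnr by blast
  show "chain_counts ` L_mnr m n r \<subseteq> gen_vars m n r"
    using chain_counts_mem_gen_vars assms by blast
  show "chain_ideal (chain_counts S) = S" if "S \<in> L_mnr m n r" for S
    using chain_ideal_chain_counts that .
  show "minors_H m n r \<union> minors_V m n r \<subseteq> polys_in (gen_vars m n r)"
    by (rule minors_subset_polys_in)
  show "hibi_binomials (L_mnr m n r) (\<inter>) (\<union>) \<subseteq> polys_in (L_mnr m n r)"
    by (rule hibi_binomials_subset_polys_in) (simp add: L_mnr_Int L_mnr_Un)
  show "poly_rename chain_ideal ` (minors_H m n r \<union> minors_V m n r)
      \<subseteq> genideal (poly_ring (L_mnr m n r)) (hibi_binomials (L_mnr m n r) (\<inter>) (\<union>))"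
    using poly_rename_minors_subset_hibi_ideal unfolding hibi_ideal_eq_genideal .
  show "poly_rename chain_counts ` hibi_binomials (L_mnr m n r) (\<inter>) (\<union>)
      \<subseteq> genideal (poly_ring (gen_vars m n r)) (minors_H m n r \<union> minors_V m n r)"
    using poly_rename_hibi_binomials_subset_I_mnr[OF assms] unfolding I_mnr_def .
qed simp

end
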